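(* Let $b_0,\dots,b_{n-1}\in\{0,1\}$, $D=\Theta^{-1}[b_0,\dots,b_{n-1}]_0\subset\Omega$, and let $1\le r<k\le s$ be integers. Then $\mathbb P(\{\omega_0=s\}\cap D)\le\mathbb P(\{\omega_0=r\}\cap D)+\mathbb P(\{\omega_0=k\}\cap D)$.
   Context: $\Omega=\mathbb N_+^{\mathbb N}$ with $\mathbb P$ the product measure $\mathbb P[a_0,\dots,a_{m-1}]=\prod_{j<m}2^{-a_j}$ (i.i.d. coordinates with $\mathbb P(\omega_j=a)=2^{-a}$). $\theta(a_1,a_2)=1$ if $a_2=a_1+1$ and $0$ otherwise; $\Theta:\Omega\to\{0,1\}^{\mathbb N}$, $(\Theta\omega)_j=\theta(\omega_j,\omega_{j+1})$; $[b_0,\dots,b_{n-1}]_0=\{\gamma\in\{0,1\}^{\mathbb N}:\gamma_j=b_j,0\le j<n\}$. *)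

theory Defs
  imports "HOL-Probability.Probability"
begin

text \<open>One-coordinate law on the positive integers: P(a) = 2^(-a) for a >= 1, 0 at 0.
  Realised as Suc of a geometric(1/2) variable (pmf n = (1/2)^n * (1/2)).\<close>
definition coord_pmf :: "nat pmf" where
  "coord_pmf = map_pmf Suc (geometric_pmf (1/2))"

definition Pm :: "(nat \<Rightarrow> nat) measure" where
  "Pm = (\<Pi>\<^sub>M j\<in>(UNIV::nat set). measure_pmf coord_pmf)"

definition theta :: "nat \<Rightarrow> nat \<Rightarrow> nat" where
  "theta a1 a2 = (if a2 = a1 + 1 then 1 else 0)"

definition Theta :: "(nat \<Rightarrow> nat) \<Rightarrow> (nat \<Rightarrow> nat)" where
  "Theta \<omega> = (\<lambda>j. theta (\<omega> j) (\<omega> (Suc j)))"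

definition cyl0 :: "nat list \<Rightarrow> (nat \<Rightarrow> nat) set" where
  "cyl0 b = {\<gamma>. \<forall>j<length b. \<gamma> j = b ! j}"

end

theory Submission
  imports Defs
begin

(* Write p(a) = 2^(-a) for the law of one coordinate and
   Q_b(a) = P(omega_0 = a, Theta omega in [b]_0).  Since omega_0 is independent of the
   shifted sequence (omega_1, omega_2, ...), the first letter of b only constrains
   omega_1 relative to omega_0, giving the recursion
     Q_{1#b}(a) = p(a) * Q_b(a+1),   Q_{0#b}(a) = p(a) * (C_b - Q_b(a+1)),
   where C_b = P(Theta omega in [b]_0), and Q_{c#b}(a) = 0 for any other letter c.
   The claim Q_b(s) <= Q_b(r) + Q_b(k) for 1 <= r < k <= s then follows by induction
   on b: the empty word is the monotonicity p(s) <= p(k); a letter 1 shifts the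
   indices by one and uses the induction hypothesis; a letter 0 uses only
   p(s) <= p(k) <= p(r) and Q_b(r+1) + Q_b(k+1) <= C_b (disjoint events). *)

interpretation coord_seq: sequence_space "measure_pmf coord_pmf"
  by unfold_locales

lemma space_Pm [simp]: "space Pm = UNIV"
  by (simp add: Pm_def space_PiM)

lemma prob_space_Pm: "prob_space Pm"
  unfolding Pm_def by (rule prob_space_PiM) (simp add: prob_space_measure_pmf)

interpretation Pm: prob_space Pm
  by (rule prob_space_Pm)

lemma measurable_shift [measurable]: "(\<lambda>\<omega> j. \<omega> (Suc j)) \<in> Pm \<rightarrow>\<^sub>M Pm"
  unfolding Pm_def
  by (rule measurable_PiM_single'[where f="\<lambda>j \<omega>. \<omega> (Suc j)"]) (auto simp: space_PiM)

lemma measurable_coord [measurable]: "(\<lambda>\<omega>. \<omega> j) \<in> Pm \<rightarrow>\<^sub>M count_space UNIV"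
  unfolding Pm_def by simp

lemma measurable_theta_coord: "(\<lambda>\<omega>. theta (\<omega> j) (\<omega> (Suc j))) \<in> Pm \<rightarrow>\<^sub>M count_space UNIV"
proof (rule measurable_compose_countable[where f="\<lambda>i \<omega>. theta i (\<omega> (Suc j))" and g="\<lambda>\<omega>. \<omega> j"])
  fix i :: nat
  show "(\<lambda>\<omega>. theta i (\<omega> (Suc j))) \<in> Pm \<rightarrow>\<^sub>M count_space UNIV"
    using measurable_compose[OF measurable_coord[of "Suc j"], of "theta i" "count_space UNIV"]
    by simp
qed (rule measurable_coord)

lemma sets_Theta_cyl: "{\<omega>. Theta \<omega> \<in> cyl0 b} \<in> sets Pm"
proof -
  have "{\<omega>. Theta \<omega> \<in> cyl0 b}
        = (\<Inter>j\<in>{..<length b}. (\<lambda>\<omega>. theta (\<omega> j) (\<omega> (Suc j))) -` {b!j} \<inter> space Pm)"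
    by (auto simp: Theta_def cyl0_def)
  also have "\<dots> \<in> sets Pm"
    by (intro sets.countable_INT'' measurable_sets[OF measurable_theta_coord])
       (auto simp flip: space_Pm)
  finally show ?thesis .
qed

lemma sets_first_Theta_cyl: "{\<omega>. P (\<omega> 0) \<and> Theta \<omega> \<in> cyl0 b} \<in> sets Pm"
proof -
  have "{\<omega>. P (\<omega> 0) \<and> Theta \<omega> \<in> cyl0 b}
        = ((\<lambda>\<omega>. \<omega> 0) -` {x. P x} \<inter> space Pm) \<inter> {\<omega>. Theta \<omega> \<in> cyl0 b}"
    by auto
  also have "\<dots> \<in> sets Pm"
    by (intro sets.Int sets_Theta_cyl measurable_sets[OF measurable_coord]) auto
  finally show ?thesis .
qed

text \<open>Pm is the image of (law of omega_0) x Pm under prepending a coordinate, so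
  P(omega_0 = a and shift omega in B) factors as p(a) * P(B).\<close>
lemma measure_first_and_shift:
  assumes B: "B \<in> sets Pm"
  shows "measure Pm {\<omega>. \<omega> 0 = a \<and> (\<lambda>j. \<omega> (Suc j)) \<in> B} = pmf coord_pmf a * measure Pm B"
proof -
  let ?M = "measure_pmf coord_pmf"
  let ?prepend = "\<lambda>(s, \<omega>). case_nat s \<omega> :: nat \<Rightarrow> nat"
  let ?A = "{\<omega>. \<omega> 0 = a \<and> (\<lambda>j. \<omega> (Suc j)) \<in> B}"
  have "?A = {\<omega>\<in>space Pm. \<omega> 0 = a} \<inter> ((\<lambda>\<omega> j. \<omega> (Suc j)) -` B \<inter> space Pm)"
    by auto
  also have "\<dots> \<in> sets Pm" using B by measurable
  finally have A: "?A \<in> sets Pm" .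
  have prepend: "?prepend \<in> ?M \<Otimes>\<^sub>M Pm \<rightarrow>\<^sub>M Pm"
    unfolding Pm_def by measurable
  have preimage: "?prepend -` ?A \<inter> space (?M \<Otimes>\<^sub>M Pm) = {a} \<times> B"
    using sets.sets_into_space[OF B] by (auto simp: space_pair_measure)
  have "measure Pm ?A = measure (distr (?M \<Otimes>\<^sub>M Pm) Pm ?prepend) ?A"
    using coord_seq.PiM_iter unfolding Pm_def by simp
  also have "\<dots> = measure (?M \<Otimes>\<^sub>M Pm) (?prepend -` ?A \<inter> space (?M \<Otimes>\<^sub>M Pm))"
    by (rule measure_distr[OF prepend A])
  also have "\<dots> = measure (?M \<Otimes>\<^sub>M Pm) ({a} \<times> B)"
    by (simp only: preimage)
  also have "\<dots> = measure ?M {a} * measure Pm B"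
    using B unfolding Pm_def measure_def
    by (subst coord_seq.P.emeasure_pair_measure_Times) (auto simp: enn2real_mult)
  finally show ?thesis by (simp add: measure_pmf_single)
qed

lemma pmf_coord_Suc: "pmf coord_pmf (Suc n) = (1/2::real) ^ Suc n"
proof -
  have "pmf coord_pmf (Suc n) = pmf (geometric_pmf (1/2)) n"
    unfolding coord_pmf_def by (rule pmf_map_inj') (simp add: inj_def)
  then show ?thesis by simp
qed

lemma pmf_coord_antimono: "1 \<le> k \<Longrightarrow> k \<le> s \<Longrightarrow> pmf coord_pmf s \<le> pmf coord_pmf k"
  by (cases k; cases s) (auto simp: pmf_coord_Suc power_decreasing)

definition cyl_prob :: "nat list \<Rightarrow> real" where
  "cyl_prob b = measure Pm {\<omega>. Theta \<omega> \<in> cyl0 b}"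

definition start_prob :: "nat list \<Rightarrow> nat \<Rightarrow> real" where
  "start_prob b a = measure Pm {\<omega>. \<omega> 0 = a \<and> Theta \<omega> \<in> cyl0 b}"

lemma start_prob_nonneg: "0 \<le> start_prob b a"
  by (simp add: start_prob_def)

text \<open>Two different starting values give disjoint subevents of the cylinder.\<close>
lemma start_prob_pair_le:
  assumes "a \<noteq> a'"
  shows "start_prob b a + start_prob b a' \<le> cyl_prob b"
proof -
  have "start_prob b a + start_prob b a'
        = measure Pm ({\<omega>. \<omega> 0 = a \<and> Theta \<omega> \<in> cyl0 b} \<union> {\<omega>. \<omega> 0 = a' \<and> Theta \<omega> \<in> cyl0 b})"
    unfolding start_prob_def using assms
    by (subst Pm.finite_measure_Union)
       (auto intro: sets_first_Theta_cyl[where P="\<lambda>x. x = a", simplified]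
                    sets_first_Theta_cyl[where P="\<lambda>x. x = a'", simplified])
  also have "\<dots> \<le> cyl_prob b"
    unfolding cyl_prob_def by (rule Pm.finite_measure_mono) (auto intro: sets_Theta_cyl)
  finally show ?thesis .
qed

lemma start_prob_Nil: "start_prob [] a = pmf coord_pmf a"
proof -
  have "{\<omega>. \<omega> 0 = a \<and> Theta \<omega> \<in> cyl0 []} = {\<omega>. \<omega> 0 = a \<and> (\<lambda>j. \<omega> (Suc j)) \<in> space Pm}"
    by (simp add: cyl0_def)
  then show ?thesis
    using measure_first_and_shift[OF sets.top[of Pm], of a]
    by (simp add: start_prob_def Pm.prob_space[unfolded space_Pm])
qed

text \<open>Splitting off the first letter: it constrains only omega_1 relative to omega_0.\<close>
lemma start_prob_Cons:
  "start_prob (c # b) a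
     = pmf coord_pmf a * measure Pm {\<omega>. theta a (\<omega> 0) = c \<and> Theta \<omega> \<in> cyl0 b}"
proof -
  have "{\<omega>. \<omega> 0 = a \<and> Theta \<omega> \<in> cyl0 (c # b)} =
        {\<omega>. \<omega> 0 = a \<and> (\<lambda>j. \<omega> (Suc j)) \<in> {\<omega>. theta a (\<omega> 0) = c \<and> Theta \<omega> \<in> cyl0 b}}"
    by (auto simp: cyl0_def Theta_def All_less_Suc2)
  then show ?thesis
    unfolding start_prob_def using measure_first_and_shift[OF sets_first_Theta_cyl] by simp
qed

lemma start_prob_Cons_one: "start_prob (1 # b) a = pmf coord_pmf a * start_prob b (Suc a)"
proof -
  have "{\<omega>. theta a (\<omega> 0) = 1 \<and> Theta \<omega> \<in> cyl0 b} = {\<omega>. \<omega> 0 = Suc a \<and> Theta \<omega> \<in> cyl0 b}"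
    by (auto simp: theta_def)
  then show ?thesis by (simp only: start_prob_Cons start_prob_def[of b])
qed

lemma start_prob_Cons_zero:
  "start_prob (0 # b) a = pmf coord_pmf a * (cyl_prob b - start_prob b (Suc a))"
proof -
  have "{\<omega>. theta a (\<omega> 0) = 0 \<and> Theta \<omega> \<in> cyl0 b}
        = {\<omega>. Theta \<omega> \<in> cyl0 b} - {\<omega>. \<omega> 0 = Suc a \<and> Theta \<omega> \<in> cyl0 b}"
    by (auto simp: theta_def)
  moreover have "measure Pm ({\<omega>. Theta \<omega> \<in> cyl0 b} - {\<omega>. \<omega> 0 = Suc a \<and> Theta \<omega> \<in> cyl0 b})
                 = cyl_prob b - start_prob b (Suc a)"
    unfolding cyl_prob_def start_prob_def
    by (rule Pm.finite_measure_Diff)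
       (auto intro: sets_Theta_cyl sets_first_Theta_cyl[where P="\<lambda>x. x = Suc a", simplified])
  ultimately show ?thesis by (simp add: start_prob_Cons)
qed

lemma start_prob_Cons_other: "c \<noteq> 0 \<Longrightarrow> c \<noteq> 1 \<Longrightarrow> start_prob (c # b) a = 0"
  by (simp add: start_prob_Cons theta_def)

text \<open>Inequality behind the letter 1: weights p_s <= p_r, p_k multiply an already
  established subadditive bound.\<close>
lemma weighted_subadditive:
  fixes ps pr pk X Y Z :: real
  assumes "0 \<le> ps" "ps \<le> pr" "ps \<le> pk" "0 \<le> X" "0 \<le> Y" "Z \<le> X + Y"
  shows "ps * Z \<le> pr * X + pk * Y"
proof -
  have "ps * Z \<le> ps * X + ps * Y"
    using assms mult_left_mono[of Z "X + Y" ps] by (simp add: distrib_left)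
  also have "\<dots> \<le> pr * X + pk * Y"
    using assms by (intro add_mono mult_right_mono) auto
  finally show ?thesis .
qed

text \<open>Inequality behind the letter 0: complements of disjoint parts x, y of mass C.\<close>
lemma weighted_complement:
  fixes ps pk pr C x y z :: real
  assumes "0 \<le> ps" "ps \<le> pk" "pk \<le> pr" "0 \<le> x" "0 \<le> y" "0 \<le> z" "x + y \<le> C"
  shows "ps * (C - z) \<le> pr * (C - x) + pk * (C - y)"
proof -
  have "0 \<le> C" using assms by linarith
  then have "ps * (C - z) \<le> pk * C"
    using assms mult_left_mono[of "C - z" C ps] mult_right_mono[of ps pk C] by linarith
  moreover have "pk * y \<le> pr * (C - x)"
    using assms by (intro mult_mono) auto
  ultimately show ?thesis by (simp add: algebra_simps)
qed

text \<open>The main estimate, for every word b (letters other than 0, 1 give empty events).\<close>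
lemma start_prob_le:
  "1 \<le> r \<Longrightarrow> r < k \<Longrightarrow> k \<le> s \<Longrightarrow> start_prob b s \<le> start_prob b r + start_prob b k"
proof (induction b arbitrary: r k s)
  case Nil
  then show ?case
    using pmf_coord_antimono[of k s] pmf_nonneg[of coord_pmf r]
    by (auto simp: start_prob_Nil intro: add_increasing)
next
  case (Cons c b)
  let ?p = "pmf coord_pmf"
  have p_order: "?p s \<le> ?p k" "?p k \<le> ?p r"
    using Cons.prems pmf_coord_antimono by auto
  consider "c = 1" | "c = 0" | "c \<noteq> 0 \<and> c \<noteq> 1" by blast
  then show ?case
  proof cases
    case 1
    have "start_prob b (Suc s) \<le> start_prob b (Suc r) + start_prob b (Suc k)"
      using Cons.prems by (intro Cons.IH) auto
    then show ?thesis
      unfolding 1 start_prob_Cons_one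
      using p_order by (intro weighted_subadditive) (auto simp: start_prob_nonneg)
  next
    case 2
    have "start_prob b (Suc r) + start_prob b (Suc k) \<le> cyl_prob b"
      using Cons.prems by (intro start_prob_pair_le) simp
    then show ?thesis
      unfolding 2 start_prob_Cons_zero
      using p_order by (intro weighted_complement) (auto simp: start_prob_nonneg)
  next
    case 3
    then show ?thesis by (simp add: start_prob_Cons_other)
  qed
qed

text \<open>The theorem is the main estimate rewritten in terms of D.\<close>
theorem lemma5:
  fixes b :: "nat list" and r k s :: nat
  assumes "set b \<subseteq> {0, 1}"
    and "1 \<le> r" and "r < k" and "k \<le> s"
  defines "D \<equiv> Theta -` cyl0 b \<inter> space Pm"
  shows "measure Pm ({\<omega> \<in> space Pm. \<omega> 0 = s} \<inter> D)
           \<le> measure Pm ({\<omega> \<in> space Pm. \<omega> 0 = r} \<inter> D)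
            + measure Pm ({\<omega> \<in> space Pm. \<omega> 0 = k} \<inter> D)"
proof -
  have "measure Pm ({\<omega> \<in> space Pm. \<omega> 0 = a} \<inter> D) = start_prob b a" for a
    by (simp add: D_def start_prob_def Int_def conj_commute)
  then show ?thesis using start_prob_le[OF assms(2-4)] by simp
qed

end
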